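(* Let $m \geq 0$, $n \geq 1$ be integers. For a sorted configuration $c = (c^t; c^b)$ on $K_{m,n}^0$, let $k = (k_1,\ldots,k_n)$ with $k_j := |\{ i \in \{1,\ldots,m\} : c^t_i < j\}|$, and define $\Psi(c) := \big(F(k), F(c^b)\big)$. Then $\Psi$ is a bijection from the set of sorted stochastically recurrent configurations on $K_{m,n}^0$ to the set of compatible pairs $(F, F')$ with $F \in \mathrm{Ferrers}_{m,n}$ and $F' \in \mathrm{Ferrers}_{\leq m, n}$. Moreover, for such $c$, $\mathrm{level}(c) = \mathrm{Area}(F(c^b)) - \mathrm{Area}(F(k))$, and this is also the number of $\mathsf{Add}$ operations in any sequence of legal $\mathsf{Shift}$ and $\mathsf{Add}$ operations transforming $F(k)$ into $F(c^b)$.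
   Context: $K_{m,n}^0$ is the complete bipartite graph with "top" vertices $v^t_0, v^t_1, \ldots, v^t_m$ and "bottom" vertices $v^b_1, \ldots, v^b_n$, with an edge between every top vertex and every bottom vertex; $v^t_0$ is the sink. A configuration is a vector $c = (c^t_1, \ldots, c^t_m; c^b_1, \ldots, c^b_n)$ of non-negative integers ($c^*_i$ = number of grains at $v^*_i$); it is sorted if $c^t$ and $c^b$ are both weakly increasing. $c$ is stable if $c^t_i < n$ for all $i$ and $c^b_j < m+1$ for all $j$. Stochastic sandpile model (SSM) with a fixed parameter $p \in (0,1)$: an unstable vertex topples as follows: for each of its neighbours (for a bottom vertex this includes the sink), independently (and independently of all previous topplings), with probability $p$ it sends one grain to that neighbour, and otherwise keeps it; grains sent to the sink disappear. Repeated toppling from any configuration reaches a random stable configuration whose law does not depend on toppling order. In the Markov chain on stable configurations which at each step adds a grain to a uniformly random non-sink vertex and stabilises by the SSM, a stable configuration is stochastically recurrent if it is a recurrent state (appears infinitely often). The level is $\mathrm{level}(c) := \sum_i c^t_i + \sum_j c^b_j - mn$. A Ferrers diagram with $n$ rows is a left-aligned collection of cells in $n$ rows (ordered bottom to top, rows may be empty) whose row lengths are weakly increasing from bottom to top; for a weakly increasing $s = (s_1,\ldots,s_n)$ of non-negative integers, $F(s)$ is the Ferrers diagram with $s_i$ cells in row $i$. Its number of columns is $s_n$. $\mathrm{Ferrers}_{m,n}$ (resp. $\mathrm{Ferrers}_{\leq m,n}$) is the set of Ferrers diagrams with $n$ rows and exactly $m$ (resp. at most $m$) columns. $\mathrm{Area}(F)$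 is the number of cells. Operations on $F(s)$: $\mathsf{Shift}$ moves one cell from a row $p$ to a row $p' < p$ (i.e. $s_p \mapsto s_p - 1$, $s_{p'} \mapsto s_{p'} + 1$); $\mathsf{Add}$ adds a cell at the right of a row $p$ ($s_p \mapsto s_p + 1$). An operation is legal if the result is again a Ferrers diagram (the number of columns may change). An ordered pair $(F, F')$ is compatible if $F'$ can be obtained from $F$ by a finite sequence of legal $\mathsf{Shift}$ and $\mathsf{Add}$ operations. *)

theory Defs
  imports Complex_Main
begin

text \<open>A configuration is a pair (ct, cb) of lists: ct ! (i-1) is the number of grains
  on the top vertex v^t_i (i = 1..m), cb ! (j-1) the number on the bottom vertex v^b_j
  (j = 1..n). The sink v^t_0 carries no grains.\<close>

type_synonym config = "nat list \<times> nat list"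

definition is_config :: "nat \<Rightarrow> nat \<Rightarrow> config \<Rightarrow> bool" where
  "is_config m n c \<longleftrightarrow> length (fst c) = m \<and> length (snd c) = n"

definition sorted_config :: "config \<Rightarrow> bool" where
  "sorted_config c \<longleftrightarrow> sorted (fst c) \<and> sorted (snd c)"

definition stable :: "nat \<Rightarrow> nat \<Rightarrow> config \<Rightarrow> bool" where
  "stable m n c \<longleftrightarrow> (\<forall>i<m. fst c ! i < n) \<and> (\<forall>j<n. snd c ! j < m + 1)"

definition level :: "nat \<Rightarrow> nat \<Rightarrow> config \<Rightarrow> int" where
  "level m n c = int (sum_list (fst c)) + int (sum_list (snd c)) - int (m * n)"

text \<open>Toppling of top vertex v^t_{i+1}: it sends one grain to each bottom vertex
  with index (0-based) in S (its neighbours are exactly the n bottom vertices).\<close>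
definition topple_top :: "nat \<Rightarrow> nat \<Rightarrow> nat set \<Rightarrow> config \<Rightarrow> config" where
  "topple_top n i S c =
     ((fst c)[i := fst c ! i - card S],
      map (\<lambda>j. snd c ! j + (if j \<in> S then 1 else 0)) [0..<n])"

text \<open>Toppling of bottom vertex v^b_{j+1}: it sends one grain to each top vertex
  with (0-based) index in S and, if ks, one grain to the sink (which disappears).\<close>
definition topple_bot :: "nat \<Rightarrow> nat \<Rightarrow> nat set \<Rightarrow> bool \<Rightarrow> config \<Rightarrow> config" where
  "topple_bot m j S ks c =
     (map (\<lambda>i. fst c ! i + (if i \<in> S then 1 else 0)) [0..<m],
      (snd c)[j := snd c ! j - card S - (if ks then 1 else 0)])"

text \<open>One SSM toppling step with positive probability: an unstable vertex topples and the
  set of neighbours receiving a grain has probability p^(#sent) (1-p)^(#kept) > 0.\<close>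
definition ssm_step :: "real \<Rightarrow> nat \<Rightarrow> nat \<Rightarrow> config \<Rightarrow> config \<Rightarrow> bool" where
  "ssm_step p m n c c' \<longleftrightarrow>
     (\<exists>i<m. n \<le> fst c ! i \<and>
        (\<exists>S. S \<subseteq> {..<n} \<and> p ^ card S * (1 - p) ^ (n - card S) > 0 \<and>
             c' = topple_top n i S c)) \<or>
     (\<exists>j<n. m + 1 \<le> snd c ! j \<and>
        (\<exists>S ks. S \<subseteq> {..<m} \<and>
             p ^ (card S + (if ks then 1 else 0)) *
               (1 - p) ^ (m + 1 - card S - (if ks then 1 else 0)) > 0 \<and>
             c' = topple_bot m j S ks c))"

text \<open>d is in the support of the (random) stabilisation of c under the SSM.\<close>
definition ssm_stabilises_to :: "real \<Rightarrow> nat \<Rightarrow> nat \<Rightarrow> config \<Rightarrow> config \<Rightarrow> bool" where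
  "ssm_stabilises_to p m n c d \<longleftrightarrow> (ssm_step p m n)\<^sup>*\<^sup>* c d \<and> stable m n d"

definition add_top :: "nat \<Rightarrow> config \<Rightarrow> config" where
  "add_top i c = ((fst c)[i := fst c ! i + 1], snd c)"

definition add_bot :: "nat \<Rightarrow> config \<Rightarrow> config" where
  "add_bot j c = (fst c, (snd c)[j := snd c ! j + 1])"

text \<open>Positive-probability transitions of the Markov chain on stable configurations:
  add a grain to a (uniformly random) non-sink vertex and stabilise by the SSM.\<close>
definition chain_step :: "real \<Rightarrow> nat \<Rightarrow> nat \<Rightarrow> config \<Rightarrow> config \<Rightarrow> bool" where
  "chain_step p m n c d \<longleftrightarrow> is_config m n c \<and> stable m n c \<and>
     ((\<exists>i<m. ssm_stabilises_to p m n (add_top i c) d) \<or>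
      (\<exists>j<n. ssm_stabilises_to p m n (add_bot j c) d))"

text \<open>Recurrent state of this finite-state Markov chain: every state reachable from c
  (with positive probability) leads back to c.\<close>
definition stoch_recurrent :: "real \<Rightarrow> nat \<Rightarrow> nat \<Rightarrow> config \<Rightarrow> bool" where
  "stoch_recurrent p m n c \<longleftrightarrow> is_config m n c \<and> stable m n c \<and>
     (\<forall>d. (chain_step p m n)\<^sup>*\<^sup>* c d \<longrightarrow> (chain_step p m n)\<^sup>*\<^sup>* d c)"

text \<open>A Ferrers diagram with n rows is represented by its row-length list s
  (s ! (i-1) = s_i, rows bottom to top), weakly increasing.\<close>

definition Ferrers_eq :: "nat \<Rightarrow> nat \<Rightarrow> nat list set" where
  "Ferrers_eq m n = {s. length s = n \<and> sorted s \<and> last s = m}"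

definition Ferrers_le :: "nat \<Rightarrow> nat \<Rightarrow> nat list set" where
  "Ferrers_le m n = {s. length s = n \<and> sorted s \<and> last s \<le> m}"

definition area :: "nat list \<Rightarrow> nat" where
  "area s = sum_list s"

datatype ferrers_op = Shift nat nat | Add nat

fun apply_op :: "ferrers_op \<Rightarrow> nat list \<Rightarrow> nat list" where
  "apply_op (Shift q r) s = (s[q := s ! q - 1])[r := (s[q := s ! q - 1]) ! r + 1]"
| "apply_op (Add q) s = s[q := s ! q + 1]"

fun legal_op :: "ferrers_op \<Rightarrow> nat list \<Rightarrow> bool" where
  "legal_op (Shift q r) s \<longleftrightarrow> q < length s \<and> r < q \<and> 0 < s ! q \<and> sorted (apply_op (Shift q r) s)"
| "legal_op (Add q) s \<longleftrightarrow> q < length s \<and> sorted (apply_op (Add q) s)"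

fun ops_path :: "nat list \<Rightarrow> ferrers_op list \<Rightarrow> nat list \<Rightarrow> bool" where
  "ops_path s [] t \<longleftrightarrow> s = t"
| "ops_path s (op1 # os) t \<longleftrightarrow> legal_op op1 s \<and> ops_path (apply_op op1 s) os t"

definition compatible :: "nat list \<Rightarrow> nat list \<Rightarrow> bool" where
  "compatible F F' \<longleftrightarrow> (\<exists>ops. ops_path F ops F')"

fun is_add :: "ferrers_op \<Rightarrow> bool" where
  "is_add (Add _) = True"
| "is_add (Shift _ _) = False"

definition num_adds :: "ferrers_op list \<Rightarrow> nat" where
  "num_adds ops = length (filter is_add ops)"

definition kvec :: "nat \<Rightarrow> nat \<Rightarrow> config \<Rightarrow> nat list" where
  "kvec m n c = map (\<lambda>j. card {i. i < m \<and> fst c ! i < j}) [1..<n+1]"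

definition Psi :: "nat \<Rightarrow> nat \<Rightarrow> config \<Rightarrow> nat list \<times> nat list" where
  "Psi m n c = (kvec m n c, snd c)"

end

theory Submission
  imports Defs
begin

(* Every stable configuration reaches the maximal stable configuration by adding grains, so c is
   stochastically recurrent iff it is reachable from it. Topplings and additions preserve the
   property that any top vertices T and bottom vertices B carry at least card T * card B grains,
   one per edge between them. For T = {i. c^t_i < b} and B the first b bottom vertices this says
   that the prefix sums of k are dominated by those of c^b, which yields a sequence of legal
   operations from F(k) to F(c^b). Conversely, along such a sequence one maintains an edge set of
   K_{m,n} with m - c^b_j edges at bottom vertex j and at most c^t_i at top vertex i; firing every
   bottom vertex once along its edges builds c from the maximal configuration. Finally k is the
   conjugate of c^t, which gives injectivity and, by double counting, the level formula. *)

lemma nth_list_update_if: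
  "xs[i := v] ! k = (if k = i \<and> i < length xs then v else xs ! k)"
  by (cases "k = i"; cases "i < length xs") (auto simp: list_update_beyond)

lemma sum_plus_indicator:
  assumes "finite B"
  shows "(\<Sum>j\<in>B. f j + (if j \<in> S then 1 else 0)) = sum f B + card (B \<inter> S)"
  using assms by (simp add: sum.distrib sum.If_cases Int_def)

lemma card_add_card_le_card_Int:
  assumes "finite U" "B \<subseteq> U" "S \<subseteq> U"
  shows "card B + card S \<le> card U + card (B \<inter> S)"
proof -
  have "card (B \<union> S) \<le> card U" using assms by (intro card_mono) auto
  moreover have "card B + card S = card (B \<union> S) + card (B \<inter> S)"
    using assms by (intro card_Un_Int) (auto intro: finite_subset)
  ultimately show ?thesis by linarith
qed

lemma is_config_topple_top [simp]: "is_config m n (topple_top n i S c) = (length (fst c) = m)"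
  by (simp add: is_config_def topple_top_def)

lemma is_config_topple_bot [simp]: "is_config m n (topple_bot m j S ks c) = (length (snd c) = n)"
  by (simp add: is_config_def topple_bot_def)

lemma is_config_add_top [simp]: "is_config m n (add_top i c) = is_config m n c"
  by (simp add: is_config_def add_top_def)

lemma is_config_add_bot [simp]: "is_config m n (add_bot j c) = is_config m n c"
  by (simp add: is_config_def add_bot_def)

lemma ssm_step_topple_top:
  assumes "0 < p" "p < 1" "i < m" "n \<le> fst c ! i" "S \<subseteq> {..<n}"
  shows "ssm_step p m n c (topple_top n i S c)"
  unfolding ssm_step_def using assms by (intro disjI1 exI[of _ i] conjI exI[of _ S]) auto

lemma ssm_step_topple_bot:
  assumes "0 < p" "p < 1" "j < n" "m + 1 \<le> snd c ! j" "S \<subseteq> {..<m}"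
  shows "ssm_step p m n c (topple_bot m j S ks c)"
  unfolding ssm_step_def using assms by (intro disjI2 exI[of _ j] conjI exI[of _ S] exI[of _ ks]) auto

definition config_le :: "nat \<Rightarrow> nat \<Rightarrow> config \<Rightarrow> config \<Rightarrow> bool" where
  "config_le m n c d \<longleftrightarrow> (\<forall>i<m. fst c ! i \<le> fst d ! i) \<and> (\<forall>j<n. snd c ! j \<le> snd d ! j)"

lemma config_le_add_top: "is_config m n c \<Longrightarrow> config_le m n c (add_top i c)"
  by (auto simp: config_le_def add_top_def is_config_def nth_list_update_if)

lemma config_le_add_bot: "is_config m n c \<Longrightarrow> config_le m n c (add_bot j c)"
  by (auto simp: config_le_def add_bot_def is_config_def nth_list_update_if)

lemma stable_config_le: "config_le m n c d \<Longrightarrow> stable m n d \<Longrightarrow> stable m n c"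
  unfolding config_le_def stable_def by (meson le_less_trans)

section \<open>Grains covering the edges of induced subgraphs\<close>

definition covers_edges :: "nat \<Rightarrow> nat \<Rightarrow> config \<Rightarrow> bool" where
  "covers_edges m n c \<longleftrightarrow> (\<forall>T B. T \<subseteq> {..<m} \<longrightarrow> B \<subseteq> {..<n} \<longrightarrow>
      card T * card B \<le> (\<Sum>i\<in>T. fst c ! i) + (\<Sum>j\<in>B. snd c ! j))"

lemma covers_edgesD:
  "covers_edges m n c \<Longrightarrow> T \<subseteq> {..<m} \<Longrightarrow> B \<subseteq> {..<n} \<Longrightarrow>
   card T * card B \<le> (\<Sum>i\<in>T. fst c ! i) + (\<Sum>j\<in>B. snd c ! j)"
  by (simp add: covers_edges_def)

lemma covers_edges_mono:
  assumes "covers_edges m n c" "config_le m n c d"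
  shows "covers_edges m n d"
  unfolding covers_edges_def
proof (intro allI impI)
  fix T B assume T: "T \<subseteq> {..<m}" and B: "B \<subseteq> {..<n}"
  have "(\<Sum>i\<in>T. fst c ! i) \<le> (\<Sum>i\<in>T. fst d ! i)" "(\<Sum>j\<in>B. snd c ! j) \<le> (\<Sum>j\<in>B. snd d ! j)"
    using assms(2) T B by (auto simp: config_le_def subset_iff intro!: sum_mono)
  then show "card T * card B \<le> (\<Sum>i\<in>T. fst d ! i) + (\<Sum>j\<in>B. snd d ! j)"
    using covers_edgesD[OF assms(1) T B] by linarith
qed

text \<open>A vertex of degree d that topples along S keeps at least d - card S grains, which pay for
  its edges to B outside S; the edges to B \<inter> S are paid by the grains it sends.\<close>

lemma covers_edges_topple_top:
  assumes cov: "covers_edges m n c" and len: "length (fst c) = m"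
    and i: "i < m" and unstable: "n \<le> fst c ! i" and S: "S \<subseteq> {..<n}"
  shows "covers_edges m n (topple_top n i S c)"
  unfolding covers_edges_def
proof (intro allI impI)
  fix T B assume T: "T \<subseteq> {..<m}" and B: "B \<subseteq> {..<n}"
  let ?c = "topple_top n i S c"
  have fT: "finite T" and fB: "finite B" using T B finite_subset by blast+
  have "(\<Sum>j\<in>B. snd ?c ! j) = (\<Sum>j\<in>B. snd c ! j + (if j \<in> S then 1 else 0))"
    using B by (intro sum.cong) (auto simp: topple_top_def)
  also have "\<dots> = (\<Sum>j\<in>B. snd c ! j) + card (B \<inter> S)" using fB by (rule sum_plus_indicator)
  finally have bot: "(\<Sum>j\<in>B. snd ?c ! j) = (\<Sum>j\<in>B. snd c ! j) + card (B \<inter> S)" .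
  show "card T * card B \<le> (\<Sum>i\<in>T. fst ?c ! i) + (\<Sum>j\<in>B. snd ?c ! j)"
  proof (cases "i \<in> T")
    case False
    then have "(\<Sum>i\<in>T. fst ?c ! i) = (\<Sum>i\<in>T. fst c ! i)"
      by (intro sum.cong) (auto simp: topple_top_def nth_list_update_if)
    then show ?thesis using covers_edgesD[OF cov T B] bot by linarith
  next
    case True
    have "(\<Sum>i\<in>T. fst ?c ! i) = fst ?c ! i + (\<Sum>i\<in>T - {i}. fst ?c ! i)"
      using fT True by (rule sum.remove)
    also have "\<dots> = (fst c ! i - card S) + (\<Sum>i\<in>T - {i}. fst c ! i)"
      using len i by (simp add: topple_top_def)
    finally have top: "(\<Sum>i\<in>T. fst ?c ! i) = (fst c ! i - card S) + (\<Sum>i\<in>T - {i}. fst c ! i)" .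
    have "card (T - {i}) * card B \<le> (\<Sum>i\<in>T - {i}. fst c ! i) + (\<Sum>j\<in>B. snd c ! j)"
      using T B by (intro covers_edgesD[OF cov]) auto
    moreover have "card T * card B = card B + card (T - {i}) * card B"
      using card_Suc_Diff1[OF fT True] by (metis mult_Suc)
    moreover have "card B + card S \<le> n + card (B \<inter> S)"
      using card_add_card_le_card_Int[of "{..<n}" B S] B S by simp
    moreover have "card S \<le> n" using card_mono[OF finite_lessThan S] by simp
    ultimately show ?thesis using top bot unstable by linarith
  qed
qed

lemma covers_edges_topple_bot:
  assumes cov: "covers_edges m n c" and len: "length (snd c) = n"
    and j: "j < n" and unstable: "m + 1 \<le> snd c ! j" and S: "S \<subseteq> {..<m}"
  shows "covers_edges m n (topple_bot m j S ks c)"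
  unfolding covers_edges_def
proof (intro allI impI)
  fix T B assume T: "T \<subseteq> {..<m}" and B: "B \<subseteq> {..<n}"
  let ?c = "topple_bot m j S ks c"
  have fT: "finite T" and fB: "finite B" using T B finite_subset by blast+
  have "(\<Sum>i\<in>T. fst ?c ! i) = (\<Sum>i\<in>T. fst c ! i + (if i \<in> S then 1 else 0))"
    using T by (intro sum.cong) (auto simp: topple_bot_def)
  also have "\<dots> = (\<Sum>i\<in>T. fst c ! i) + card (T \<inter> S)" using fT by (rule sum_plus_indicator)
  finally have top: "(\<Sum>i\<in>T. fst ?c ! i) = (\<Sum>i\<in>T. fst c ! i) + card (T \<inter> S)" .
  show "card T * card B \<le> (\<Sum>i\<in>T. fst ?c ! i) + (\<Sum>j\<in>B. snd ?c ! j)"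
  proof (cases "j \<in> B")
    case False
    then have "(\<Sum>j\<in>B. snd ?c ! j) = (\<Sum>j\<in>B. snd c ! j)"
      by (intro sum.cong) (auto simp: topple_bot_def nth_list_update_if)
    then show ?thesis using covers_edgesD[OF cov T B] top by linarith
  next
    case True
    have "(\<Sum>j\<in>B. snd ?c ! j) = snd ?c ! j + (\<Sum>j\<in>B - {j}. snd ?c ! j)"
      using fB True by (rule sum.remove)
    also have "\<dots> = (snd c ! j - card S - (if ks then 1 else 0)) + (\<Sum>j\<in>B - {j}. snd c ! j)"
      using len j by (simp add: topple_bot_def)
    finally have bot: "(\<Sum>j\<in>B. snd ?c ! j)
        = (snd c ! j - card S - (if ks then 1 else 0)) + (\<Sum>j\<in>B - {j}. snd c ! j)" .
    have "card T * card (B - {j}) \<le> (\<Sum>i\<in>T. fst c ! i) + (\<Sum>j\<in>B - {j}. snd c ! j)"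
      using T B by (intro covers_edgesD[OF cov]) auto
    moreover have "card T * card B = card T + card T * card (B - {j})"
      using card_Suc_Diff1[OF fB True] by (metis mult_Suc_right)
    moreover have "card T + card S \<le> m + card (T \<inter> S)"
      using card_add_card_le_card_Int[of "{..<m}" T S] T S by simp
    moreover have "card S \<le> m" using card_mono[OF finite_lessThan S] by simp
    ultimately show ?thesis using top bot unstable by (cases ks) auto
  qed
qed

lemma ssm_step_preserves:
  assumes "ssm_step p m n c d" "is_config m n c"
  shows "is_config m n d \<and> (covers_edges m n c \<longrightarrow> covers_edges m n d)"
proof -
  have len: "length (fst c) = m" "length (snd c) = n" using assms(2) by (auto simp: is_config_def)
  from assms(1) show ?thesis
    unfolding ssm_step_def
  proof (elim disjE exE conjE)
    fix i S assume "i < m" "n \<le> fst c ! i" "S \<subseteq> {..<n}" "d = topple_top n i S c"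
    then show ?thesis using len covers_edges_topple_top by simp
  next
    fix j S ks assume "j < n" "m + 1 \<le> snd c ! j" "S \<subseteq> {..<m}" "d = topple_bot m j S ks c"
    then show ?thesis using len covers_edges_topple_bot by simp
  qed
qed

lemma ssm_steps_preserve:
  assumes "(ssm_step p m n)\<^sup>*\<^sup>* c d" "is_config m n c"
  shows "is_config m n d \<and> (covers_edges m n c \<longrightarrow> covers_edges m n d)"
  using assms by (induction rule: rtranclp_induct) (auto dest: ssm_step_preserves)

lemma chain_step_preserves:
  assumes "chain_step p m n c d"
  shows "is_config m n d \<and> stable m n d \<and> (covers_edges m n c \<longrightarrow> covers_edges m n d)"
proof -
  have c: "is_config m n c" using assms by (simp add: chain_step_def)
  from assms consider i where "ssm_stabilises_to p m n (add_top i c) d"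
    | j where "ssm_stabilises_to p m n (add_bot j c) d"
    unfolding chain_step_def by blast
  then obtain a where "(ssm_step p m n)\<^sup>*\<^sup>* a d" "stable m n d" "is_config m n a" "config_le m n c a"
    by cases (metis c config_le_add_top config_le_add_bot is_config_add_top is_config_add_bot
        ssm_stabilises_to_def)+
  then show ?thesis using ssm_steps_preserve covers_edges_mono by blast
qed

lemma chain_steps_preserve:
  assumes "(chain_step p m n)\<^sup>*\<^sup>* c d" "is_config m n c" "stable m n c"
  shows "is_config m n d \<and> stable m n d \<and> (covers_edges m n c \<longrightarrow> covers_edges m n d)"
  using assms by (induction rule: rtranclp_induct) (auto dest: chain_step_preserves)

section \<open>Recurrence as reachability from the maximal stable configuration\<close>

lemma level_add_top:
  assumes "i < length (fst c)"
  shows "level m n (add_top i c) = level m n c + 1"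
proof -
  have "fst c ! i \<le> sum_list (fst c)" using assms by (rule elem_le_sum_list)
  then show ?thesis using assms by (simp add: level_def add_top_def sum_list_update)
qed

lemma level_add_bot:
  assumes "j < length (snd c)"
  shows "level m n (add_bot j c) = level m n c + 1"
proof -
  have "snd c ! j \<le> sum_list (snd c)" using assms by (rule elem_le_sum_list)
  then show ?thesis using assms by (simp add: level_def add_bot_def sum_list_update)
qed

lemma level_mono:
  assumes "is_config m n c" "is_config m n d" "config_le m n c d"
  shows "level m n c \<le> level m n d"
proof -
  have "sum_list (fst c) \<le> sum_list (fst d)" "sum_list (snd c) \<le> sum_list (snd d)"
    using assms by (auto simp: is_config_def config_le_def sum_list_sum_nth intro!: sum_mono)
  then show ?thesis by (simp add: level_def)
qed

lemma config_le_neq_cases: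
  assumes "is_config m n c" "is_config m n d" "config_le m n c d" "c \<noteq> d"
  obtains i where "i < m" "fst c ! i < fst d ! i" | j where "j < n" "snd c ! j < snd d ! j"
proof -
  have "fst c \<noteq> fst d \<or> snd c \<noteq> snd d" using assms(4) by (simp add: prod_eq_iff)
  then show thesis
    using assms(1-3) that unfolding is_config_def config_le_def
    by (metis le_neq_implies_less nth_equalityI)
qed

lemma chain_step_add_top_below:
  assumes "is_config m n c" "stable m n c" "config_le m n c d" "stable m n d"
    and "i < m" "fst c ! i < fst d ! i"
  shows "chain_step p m n c (add_top i c) \<and> config_le m n (add_top i c) d"
proof -
  have "config_le m n (add_top i c) d"
    using assms by (auto simp: config_le_def add_top_def nth_list_update_if)
  moreover have "stable m n (add_top i c)" using calculation assms(4) by (rule stable_config_le)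
  ultimately show ?thesis
    using assms by (auto simp: chain_step_def ssm_stabilises_to_def)
qed

lemma chain_step_add_bot_below:
  assumes "is_config m n c" "stable m n c" "config_le m n c d" "stable m n d"
    and "j < n" "snd c ! j < snd d ! j"
  shows "chain_step p m n c (add_bot j c) \<and> config_le m n (add_bot j c) d"
proof -
  have "config_le m n (add_bot j c) d"
    using assms by (auto simp: config_le_def add_bot_def nth_list_update_if)
  moreover have "stable m n (add_bot j c)" using calculation assms(4) by (rule stable_config_le)
  ultimately show ?thesis
    using assms by (auto simp: chain_step_def ssm_stabilises_to_def)
qed

text \<open>The missing grains can be added one at a time without any toppling, since every
  intermediate configuration lies below the stable one d.\<close>

lemma chain_reach_config_le:
  assumes "is_config m n c" "stable m n c" "is_config m n d" "stable m n d" "config_le m n c d"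
  shows "(chain_step p m n)\<^sup>*\<^sup>* c d"
  using assms
proof (induction "nat (level m n d - level m n c)" arbitrary: c rule: less_induct)
  case less
  show ?case
  proof (cases "c = d")
    case False
    obtain c' where step: "chain_step p m n c c'" and le: "config_le m n c' d"
      and lev: "level m n c' = level m n c + 1"
    proof -
      from less.prems(1,3,5) False show thesis
      proof (cases rule: config_le_neq_cases)
        case (1 i)
        then have "i < length (fst c)" using less.prems(1) by (simp add: is_config_def)
        then show thesis
          using that chain_step_add_top_below[OF less.prems(1,2,5,4) 1] level_add_top by blast
      next
        case (2 j)
        then have "j < length (snd c)" using less.prems(1) by (simp add: is_config_def)
        then show thesis
          using that chain_step_add_bot_below[OF less.prems(1,2,5,4) 2] level_add_bot by blast
      qed
    qed
    have c': "is_config m n c'" "stable m n c'" using step chain_step_preserves by blast+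
    have "level m n c' \<le> level m n d" using c' less.prems le by (intro level_mono)
    then have "(chain_step p m n)\<^sup>*\<^sup>* c' d" using less c' le lev by simp
    with step show ?thesis by (rule converse_rtranclp_into_rtranclp)
  qed simp
qed

definition max_stable :: "nat \<Rightarrow> nat \<Rightarrow> config" where
  "max_stable m n = (replicate m (n - 1), replicate n m)"

lemma is_config_max_stable: "is_config m n (max_stable m n)"
  by (simp add: max_stable_def is_config_def)

lemma stable_max_stable: "1 \<le> n \<Longrightarrow> stable m n (max_stable m n)"
  by (simp add: max_stable_def stable_def)

lemma chain_reach_max_stable:
  assumes "1 \<le> n" "is_config m n c" "stable m n c"
  shows "(chain_step p m n)\<^sup>*\<^sup>* c (max_stable m n)"
  using assms is_config_max_stable stable_max_stable
  by (intro chain_reach_config_le)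
    (auto simp: max_stable_def config_le_def stable_def less_Suc_eq_le)

lemma covers_edges_max_stable: "covers_edges m n (max_stable m n)"
  unfolding covers_edges_def
proof (intro allI impI)
  fix T B assume T: "T \<subseteq> {..<m}" and B: "B \<subseteq> {..<n}"
  have cT: "card T \<le> m" and cB: "card B \<le> n"
    using card_mono[OF finite_lessThan T] card_mono[OF finite_lessThan B] by simp_all
  have "card T * card B \<le> card T * (n - 1) + card B * m"
  proof (cases "card B < n")
    case True
    then have "card T * card B \<le> card T * (n - 1)" by (intro mult_le_mono2) linarith
    then show ?thesis by linarith
  next
    case False
    then have "card B = n" using cB by simp
    moreover have "card T * n \<le> m * n" using cT by simp
    ultimately show ?thesis by (metis mult.commute trans_le_add2)
  qed
  moreover have "(\<Sum>i\<in>T. fst (max_stable m n) ! i) = card T * (n - 1)"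
    "(\<Sum>j\<in>B. snd (max_stable m n) ! j) = card B * m"
    using T B by (simp_all add: max_stable_def subset_iff)
  ultimately show "card T * card B
      \<le> (\<Sum>i\<in>T. fst (max_stable m n) ! i) + (\<Sum>j\<in>B. snd (max_stable m n) ! j)"
    by simp
qed

lemma stoch_recurrent_iff_reachable:
  assumes "1 \<le> n" "is_config m n c" "stable m n c"
  shows "stoch_recurrent p m n c \<longleftrightarrow> (chain_step p m n)\<^sup>*\<^sup>* (max_stable m n) c"
proof
  assume "stoch_recurrent p m n c"
  then show "(chain_step p m n)\<^sup>*\<^sup>* (max_stable m n) c"
    using chain_reach_max_stable[OF assms] unfolding stoch_recurrent_def by blast
next
  assume from_max: "(chain_step p m n)\<^sup>*\<^sup>* (max_stable m n) c"
  have "(chain_step p m n)\<^sup>*\<^sup>* d c" if "(chain_step p m n)\<^sup>*\<^sup>* c d" for d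
  proof -
    have "is_config m n d" "stable m n d" using chain_steps_preserve that assms(2,3) by blast+
    then show ?thesis using chain_reach_max_stable assms(1) from_max by (blast intro: rtranclp_trans)
  qed
  then show "stoch_recurrent p m n c" using assms by (simp add: stoch_recurrent_def)
qed

lemma covers_edges_if_stoch_recurrent:
  assumes "1 \<le> n" "stoch_recurrent p m n c"
  shows "covers_edges m n c"
proof -
  have "is_config m n c" "stable m n c" using assms(2) by (simp_all add: stoch_recurrent_def)
  then have "(chain_step p m n)\<^sup>*\<^sup>* (max_stable m n) c"
    using assms stoch_recurrent_iff_reachable by blast
  then show ?thesis
    using chain_steps_preserve is_config_max_stable stable_max_stable[OF assms(1)]
      covers_edges_max_stable by blast
qed

section \<open>Building a configuration from an edge set\<close>

lemma card_less_Suc_if: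
  "card {j. j < Suc k \<and> P j} = card {j. j < k \<and> P j} + (if P k then 1 else 0)"
proof -
  have "{j. j < Suc k \<and> P j} = (if P k then insert k {j. j < k \<and> P j} else {j. j < k \<and> P j})"
    by (auto simp: less_Suc_eq)
  then show ?thesis by simp
qed

lemma ssm_steps_bottoms_to_sink:
  assumes p: "0 < p" "p < 1" and J: "finite J" "J \<subseteq> {..<n}"
    and c: "is_config m n c" "\<forall>j\<in>J. snd c ! j = m + 1"
  shows "(ssm_step p m n)\<^sup>*\<^sup>* c (fst c, map (\<lambda>j. if j \<in> J then m else snd c ! j) [0..<n])"
  using J c
proof (induction J arbitrary: c rule: finite_induct)
  case empty
  then have "map (\<lambda>j. snd c ! j) [0..<n] = snd c"
    by (intro nth_equalityI) (auto simp: is_config_def)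
  then show ?case by simp
next
  case (insert j J)
  let ?c = "topple_bot m j {} True c"
  have j: "j < length (snd c)" using insert by (simp add: is_config_def)
  have step: "ssm_step p m n c ?c" using insert p by (intro ssm_step_topple_bot) auto
  have "fst ?c = map (\<lambda>i. fst c ! i) [0..<length (fst c)]"
    using insert.prems(2) by (simp add: topple_bot_def is_config_def)
  then have fst': "fst ?c = fst c" by (simp add: map_nth)
  have snd': "snd ?c = (snd c)[j := m]" using insert.prems(3) by (simp add: topple_bot_def)
  have "is_config m n ?c" using insert.prems(2) unfolding is_config_def by (simp add: topple_bot_def)
  moreover have "\<forall>j'\<in>J. snd ?c ! j' = m + 1"
    using insert snd' by (auto simp: nth_list_update_if)
  moreover have "J \<subseteq> {..<n}" using insert.prems(1) by simp
  ultimately have "(ssm_step p m n)\<^sup>*\<^sup>* ?c (fst ?c, map (\<lambda>j'. if j' \<in> J then m else snd ?c ! j') [0..<n])"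
    using insert.IH by blast
  also have "fst ?c = fst c" by (rule fst')
  also have "map (\<lambda>j'. if j' \<in> J then m else snd ?c ! j') [0..<n]
       = map (\<lambda>j'. if j' \<in> insert j J then m else snd c ! j') [0..<n]"
    using snd' j by (auto simp: nth_list_update_if)
  finally show ?case using step by (meson converse_rtranclp_into_rtranclp)
qed

text \<open>A grain added to a full top vertex lets it fire to every bottom vertex, and each bottom
  vertex passes the extra grain on to the sink.\<close>

lemma chain_step_empty_top:
  assumes p: "0 < p" "p < 1" and n: "1 \<le> n" and x: "is_config m n x" "stable m n x"
    and i: "i < m" "fst x ! i = n - 1" and bot: "\<forall>j<n. snd x ! j = m"
  shows "chain_step p m n x ((fst x)[i := 0], snd x)"
proof -
  let ?a = "add_top i x"
  let ?b = "topple_top n i {..<n} ?a"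
  have full: "fst ?a ! i = n" using i x n by (simp add: add_top_def is_config_def)
  have step: "ssm_step p m n ?a ?b" using p i full by (intro ssm_step_topple_top) auto
  have b: "fst ?b = (fst x)[i := 0]" "snd ?b = replicate n (m + 1)" "is_config m n ?b"
    using full bot x(1) by (auto simp: topple_top_def add_top_def is_config_def intro: nth_equalityI)
  have "(ssm_step p m n)\<^sup>*\<^sup>* ?b (fst ?b, map (\<lambda>j. if j \<in> {..<n} then m else snd ?b ! j) [0..<n])"
    using b(2,3) by (intro ssm_steps_bottoms_to_sink[OF p]) auto
  also have "map (\<lambda>j. if j \<in> {..<n} then m else snd ?b ! j) [0..<n] = snd x"
    using x(1) bot by (intro nth_equalityI) (auto simp: is_config_def)
  finally have "(ssm_step p m n)\<^sup>*\<^sup>* ?a ((fst x)[i := 0], snd x)"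
    using step b(1) by (simp add: converse_rtranclp_into_rtranclp)
  moreover have "stable m n ((fst x)[i := 0], snd x)"
    using x(2) n by (auto simp: stable_def nth_list_update_if)
  ultimately show ?thesis
    using x i unfolding chain_step_def ssm_stabilises_to_def by blast
qed

lemma chain_reach_empty_tops:
  assumes p: "0 < p" "p < 1" and n: "1 \<le> n"
  shows "(chain_step p m n)\<^sup>*\<^sup>* (max_stable m n) (replicate m 0, replicate n m)"
proof -
  have "(chain_step p m n)\<^sup>*\<^sup>* (max_stable m n)
      (map (\<lambda>i. if i < k then 0 else n - 1) [0..<m], replicate n m)" if "k \<le> m" for k
    using that
  proof (induction k)
    case 0
    have "map (\<lambda>i. n - 1) [0..<m] = replicate m (n - 1)" by (simp add: map_replicate_const)
    then show ?case by (simp add: max_stable_def)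
  next
    case (Suc k)
    let ?x = "(map (\<lambda>i. if i < k then 0 else n - 1) [0..<m], replicate n m)"
    have "chain_step p m n ?x ((fst ?x)[k := 0], snd ?x)"
      using Suc.prems n by (intro chain_step_empty_top[OF p n]) (auto simp: is_config_def stable_def)
    moreover have "(fst ?x)[k := 0] = map (\<lambda>i. if i < Suc k then 0 else n - 1) [0..<m]"
      by (intro nth_equalityI) (auto simp: nth_list_update_if)
    ultimately show ?case using Suc by (auto intro: rtranclp.rtrancl_into_rtrancl)
  qed
  moreover have "map (\<lambda>i. if i < m then 0 else n - 1) [0..<m] = replicate m 0"
    by (intro nth_equalityI) auto
  ultimately show ?thesis by (metis order_refl)
qed

lemma chain_step_fire_bottom:
  assumes p: "0 < p" "p < 1" and x: "is_config m n x" "stable m n x"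
    and j: "j < n" "snd x ! j = m" and S: "S \<subseteq> {..<m}" "\<forall>i\<in>S. fst x ! i + 1 < n"
  shows "chain_step p m n x
    (map (\<lambda>i. fst x ! i + (if i \<in> S then 1 else 0)) [0..<m], (snd x)[j := m - card S])"
proof -
  let ?a = "add_bot j x"
  let ?b = "topple_bot m j S True ?a"
  have full: "snd ?a ! j = m + 1" using x j by (simp add: add_bot_def is_config_def)
  have "ssm_step p m n ?a ?b" using p j S full by (intro ssm_step_topple_bot) auto
  moreover have b: "?b = (map (\<lambda>i. fst x ! i + (if i \<in> S then 1 else 0)) [0..<m],
      (snd x)[j := m - card S])"
    using full by (simp add: topple_bot_def add_bot_def)
  moreover have "stable m n ?b"
    using x(2) S unfolding b stable_def by (auto simp: nth_list_update_if)
  ultimately have "ssm_stabilises_to p m n ?a ?b" by (simp add: ssm_stabilises_to_def)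
  then show ?thesis using x j unfolding chain_step_def b by blast
qed

text \<open>Firing every bottom vertex j once, along its edges in E and otherwise to the sink, builds
  (ct, cb) from a configuration with full bottom vertices when d j = m - cb ! j.\<close>

definition edge_witness :: "nat \<Rightarrow> nat \<Rightarrow> nat list \<Rightarrow> (nat \<Rightarrow> nat) \<Rightarrow> (nat \<times> nat) set \<Rightarrow> bool"
  where "edge_witness m n ct d E \<longleftrightarrow>
    (\<forall>j<n. card {i. i < m \<and> (i, j) \<in> E} = d j) \<and> (\<forall>i<m. card {j. j < n \<and> (i, j) \<in> E} \<le> ct ! i)"

text \<open>The state of that sweep once the bottom vertices j < k have fired.\<close>

definition sweep_config :: "nat \<Rightarrow> nat \<Rightarrow> nat list \<Rightarrow> nat list \<Rightarrow> (nat \<times> nat) set \<Rightarrow> nat \<Rightarrow> config"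
  where "sweep_config m n ct cb E k =
    (map (\<lambda>i. ct ! i - card {j. j < n \<and> (i, j) \<in> E} + card {j. j < k \<and> (i, j) \<in> E}) [0..<m],
     map (\<lambda>j. if j < k then cb ! j else m) [0..<n])"

lemma sweep_config_top_le:
  assumes "edge_witness m n ct d E" "k \<le> n" "i < m"
  shows "fst (sweep_config m n ct cb E k) ! i \<le> ct ! i"
proof -
  have "card {j. j < k \<and> (i, j) \<in> E} \<le> card {j. j < n \<and> (i, j) \<in> E}"
    using assms(2) by (intro card_mono) auto
  moreover have "card {j. j < n \<and> (i, j) \<in> E} \<le> ct ! i"
    using assms(1,3) by (simp add: edge_witness_def)
  ultimately show ?thesis using assms(3) by (simp add: sweep_config_def)
qed

lemma stable_sweep_config:
  assumes "edge_witness m n ct d E" "\<forall>i<m. ct ! i < n" "\<forall>j<n. cb ! j \<le> m" "k \<le> n"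
  shows "stable m n (sweep_config m n ct cb E k)"
  using sweep_config_top_le[OF assms(1,4)] assms(2,3)
  unfolding stable_def by (auto simp: sweep_config_def intro: le_less_trans)

lemma chain_step_sweep_config:
  assumes p: "0 < p" "p < 1" and ct: "\<forall>i<m. ct ! i < n" and cb: "\<forall>j<n. cb ! j \<le> m"
    and E: "edge_witness m n ct (\<lambda>j. m - cb ! j) E" and k: "k < n"
  shows "chain_step p m n (sweep_config m n ct cb E k) (sweep_config m n ct cb E (Suc k))"
proof -
  let ?W = "sweep_config m n ct cb E"
  let ?S = "{i. i < m \<and> (i, k) \<in> E}"
  have "fst (?W k) ! i + 1 < n" if "i \<in> ?S" for i
    using sweep_config_top_le[OF E, of "Suc k" i cb] ct that k
    by (simp add: sweep_config_def card_less_Suc_if) (meson le_less_trans)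
  then have "chain_step p m n (?W k) (map (\<lambda>i. fst (?W k) ! i + (if i \<in> ?S then 1 else 0)) [0..<m],
      (snd (?W k))[k := m - card ?S])"
    using k stable_sweep_config[OF E ct cb, of k]
    by (intro chain_step_fire_bottom[OF p]) (auto simp: sweep_config_def is_config_def)
  moreover have "map (\<lambda>i. fst (?W k) ! i + (if i \<in> ?S then 1 else 0)) [0..<m] = fst (?W (Suc k))"
    by (intro nth_equalityI) (simp_all add: sweep_config_def card_less_Suc_if)
  moreover have "card ?S = m - cb ! k" using E k by (simp add: edge_witness_def)
  then have "(snd (?W k))[k := m - card ?S] = snd (?W (Suc k))"
    using k cb by (intro nth_equalityI) (auto simp: sweep_config_def nth_list_update_if)
  ultimately show ?thesis by simp
qed

lemma chain_reach_bottom_sweep: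
  assumes p: "0 < p" "p < 1" and len: "length ct = m" "length cb = n"
    and ct: "\<forall>i<m. ct ! i < n" and cb: "\<forall>j<n. cb ! j \<le> m"
    and E: "edge_witness m n ct (\<lambda>j. m - cb ! j) E"
  shows "(chain_step p m n)\<^sup>*\<^sup>* (sweep_config m n ct cb E 0) (ct, cb)"
proof -
  have "(chain_step p m n)\<^sup>*\<^sup>* (sweep_config m n ct cb E 0) (sweep_config m n ct cb E k)"
    if "k \<le> n" for k
    using that chain_step_sweep_config[OF p ct cb E]
    by (induction k) (simp_all add: rtranclp.rtrancl_into_rtrancl)
  moreover have "sweep_config m n ct cb E n = (ct, cb)"
    using len E by (auto simp: sweep_config_def edge_witness_def intro!: nth_equalityI)
  ultimately show ?thesis by (metis order_refl)
qed

lemma chain_reach_of_edge_witness: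
  assumes p: "0 < p" "p < 1" and n: "1 \<le> n" and len: "length ct = m" "length cb = n"
    and ct: "\<forall>i<m. ct ! i < n" and cb: "\<forall>j<n. cb ! j \<le> m"
    and E: "edge_witness m n ct (\<lambda>j. m - cb ! j) E"
  shows "(chain_step p m n)\<^sup>*\<^sup>* (max_stable m n) (ct, cb)"
proof -
  have "(chain_step p m n)\<^sup>*\<^sup>* (replicate m 0, replicate n m) (sweep_config m n ct cb E 0)"
    using ct n stable_sweep_config[OF E ct cb, of 0]
    by (intro chain_reach_config_le) (auto simp: is_config_def config_le_def sweep_config_def stable_def)
  then show ?thesis
    using chain_reach_empty_tops[OF p n] chain_reach_bottom_sweep[OF p len ct cb E]
    by (meson rtranclp_trans)
qed

section \<open>Edge sets along legal operations\<close>

lemma length_apply_op [simp]: "length (apply_op op F) = length F"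
  by (cases op) auto

lemma nth_apply_Shift:
  assumes "q < length F" "r < q" "j < length F"
  shows "apply_op (Shift q r) F ! j = (if j = r then F ! r + 1 else if j = q then F ! q - 1 else F ! j)"
  using assms by (auto simp: nth_list_update_if)

lemma edge_witness_cong:
  "(\<forall>j<n. d j = d' j) \<Longrightarrow> edge_witness m n ct d E = edge_witness m n ct d' E"
  by (simp add: edge_witness_def)

lemma edge_witness_decr:
  assumes E: "edge_witness m n ct d E" and r: "r < n"
  shows "\<exists>E'. edge_witness m n ct (d(r := d r - 1)) E'"
proof (cases "d r = 0")
  case True
  then show ?thesis using E by (metis fun_upd_idem diff_0_eq_0)
next
  case False
  have col: "card {i. i < m \<and> (i, r) \<in> E} = d r" using E r by (simp add: edge_witness_def)
  then obtain i0 where i0: "i0 < m" "(i0, r) \<in> E"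
    using False by (metis (mono_tags, lifting) Collect_empty_eq card.empty)
  have "edge_witness m n ct (d(r := d r - 1)) (E - {(i0, r)})"
    unfolding edge_witness_def
  proof (intro conjI allI impI)
    fix j assume j: "j < n"
    show "card {i. i < m \<and> (i, j) \<in> E - {(i0, r)}} = (d(r := d r - 1)) j"
    proof (cases "j = r")
      case True
      then have "{i. i < m \<and> (i, j) \<in> E - {(i0, r)}} = {i. i < m \<and> (i, r) \<in> E} - {i0}" by auto
      then show ?thesis using col i0 True by simp
    next
      case False
      then show ?thesis using E j by (simp add: edge_witness_def)
    qed
  next
    fix i assume i: "i < m"
    have "card {j. j < n \<and> (i, j) \<in> E - {(i0, r)}} \<le> card {j. j < n \<and> (i, j) \<in> E}"
      by (intro card_mono) auto
    moreover have "card {j. j < n \<and> (i, j) \<in> E} \<le> ct ! i" using E i by (simp add: edge_witness_def)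
    ultimately show "card {j. j < n \<and> (i, j) \<in> E - {(i0, r)}} \<le> ct ! i" by linarith
  qed
  then show ?thesis by blast
qed

lemma edge_witness_move_edge:
  assumes E: "edge_witness m n ct d E" and r: "r < n" and q: "q < n" "q \<noteq> r"
    and i0: "i0 < m" "(i0, r) \<in> E" "(i0, q) \<notin> E"
  shows "edge_witness m n ct (d(r := d r - 1, q := d q + 1)) (insert (i0, q) (E - {(i0, r)}))"
    (is "edge_witness m n ct ?d ?E")
  unfolding edge_witness_def
proof (intro conjI allI impI)
  have col: "card {i. i < m \<and> (i, j) \<in> E} = d j" if "j < n" for j
    using E that by (simp add: edge_witness_def)
  fix j assume j: "j < n"
  consider "j = r" | "j = q" | "j \<noteq> r" "j \<noteq> q" by blast
  then show "card {i. i < m \<and> (i, j) \<in> ?E} = ?d j"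
  proof cases
    case 1
    then have "{i. i < m \<and> (i, j) \<in> ?E} = {i. i < m \<and> (i, r) \<in> E} - {i0}" using q by auto
    then show ?thesis using col[OF r] i0 1 q by (simp add: card_Diff_singleton)
  next
    case 2
    then have "{i. i < m \<and> (i, j) \<in> ?E} = insert i0 {i. i < m \<and> (i, q) \<in> E}" using q i0 by auto
    then show ?thesis using col[OF j] i0 2 by simp
  next
    case 3
    then have "{i. i < m \<and> (i, j) \<in> ?E} = {i. i < m \<and> (i, j) \<in> E}" by auto
    then show ?thesis using col[OF j] 3 by simp
  qed
next
  fix i assume i: "i < m"
  let ?row = "{j. j < n \<and> (i, j) \<in> E}"
  have "card {j. j < n \<and> (i, j) \<in> ?E} = card ?row"
  proof (cases "i = i0")
    case True
    then have "{j. j < n \<and> (i, j) \<in> ?E} = insert q (?row - {r})" using q by auto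
    moreover have "r \<in> ?row" "q \<notin> ?row - {r}" "finite ?row" using True i0 r by auto
    ultimately show ?thesis using card_Suc_Diff1[of ?row r] by simp
  next
    case False
    then show ?thesis by (intro arg_cong[where f = card]) auto
  qed
  then show "card {j. j < n \<and> (i, j) \<in> ?E} \<le> ct ! i" using E i by (simp add: edge_witness_def)
qed

lemma edge_witness_move:
  assumes E: "edge_witness m n ct d E" and r: "r < n" and q: "q < n" "q \<noteq> r" and lt: "d q < d r"
  shows "\<exists>E'. edge_witness m n ct (d(r := d r - 1, q := d q + 1)) E'"
proof -
  have "\<not> {i. i < m \<and> (i, r) \<in> E} \<subseteq> {i. i < m \<and> (i, q) \<in> E}"
  proof
    assume "{i. i < m \<and> (i, r) \<in> E} \<subseteq> {i. i < m \<and> (i, q) \<in> E}"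
    then have "card {i. i < m \<and> (i, r) \<in> E} \<le> card {i. i < m \<and> (i, q) \<in> E}"
      by (intro card_mono) auto
    then show False using E r q lt by (simp add: edge_witness_def)
  qed
  then obtain i0 where "i0 < m" "(i0, r) \<in> E" "(i0, q) \<notin> E" by blast
  then show ?thesis using edge_witness_move_edge[OF E r q] by blast
qed

lemma edge_witness_apply_Add:
  assumes E: "edge_witness m n ct (\<lambda>j. m - F ! j) E" and len: "length F = n"
    and op: "legal_op (Add q) F"
  shows "\<exists>E'. edge_witness m n ct (\<lambda>j. m - apply_op (Add q) F ! j) E'"
proof -
  have q: "q < n" using op len by simp
  have eq: "\<forall>j<n. m - apply_op (Add q) F ! j = ((\<lambda>j. m - F ! j)(q := m - F ! q - 1)) j"
    using q len by (auto simp: nth_list_update_if)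
  obtain E' where "edge_witness m n ct ((\<lambda>j. m - F ! j)(q := m - F ! q - 1)) E'"
    using edge_witness_decr[OF E q] by blast
  then show ?thesis using edge_witness_cong[OF eq] by blast
qed

text \<open>Intermediate diagrams may have more than m columns, so m - F ! j is truncated.\<close>

lemma edge_witness_apply_Shift:
  assumes E: "edge_witness m n ct (\<lambda>j. m - F ! j) E" and len: "length F = n"
    and op: "legal_op (Shift q r) F"
  shows "\<exists>E'. edge_witness m n ct (\<lambda>j. m - apply_op (Shift q r) F ! j) E'"
proof -
  let ?G = "apply_op (Shift q r) F"
  have q: "q < n" and r: "r < q" and pos: "0 < F ! q" and sorted: "sorted ?G"
    using op len by (simp_all only: legal_op.simps)
  have G: "?G ! j = (if j = r then F ! r + 1 else if j = q then F ! q - 1 else F ! j)" if "j < n" for j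
    using nth_apply_Shift[of q F r j] that q r len by simp
  have "?G ! r \<le> ?G ! q" by (rule sorted_nth_mono[OF sorted]) (use r q len in simp_all)
  then have gap: "F ! r + 2 \<le> F ! q" using G[of r] G[of q] q r pos by simp
  show ?thesis
  proof (cases "F ! q \<le> m")
    case True
    have eq: "\<forall>j<n. m - ?G ! j = ((\<lambda>j. m - F ! j)(r := m - F ! r - 1, q := m - F ! q + 1)) j"
      using G True r pos by auto
    have "m - F ! q < m - F ! r" using True gap by linarith
    then obtain E' where
      "edge_witness m n ct ((\<lambda>j. m - F ! j)(r := m - F ! r - 1, q := m - F ! q + 1)) E'"
      using edge_witness_move[OF E _ q] r q by fastforce
    then show ?thesis using edge_witness_cong[OF eq] by blast
  next
    case False
    have eq: "\<forall>j<n. m - ?G ! j = ((\<lambda>j. m - F ! j)(r := m - F ! r - 1)) j"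
      using G False r by auto
    obtain E' where "edge_witness m n ct ((\<lambda>j. m - F ! j)(r := m - F ! r - 1)) E'"
      using edge_witness_decr[OF E] r q by fastforce
    then show ?thesis using edge_witness_cong[OF eq] by blast
  qed
qed

lemma edge_witness_apply_op:
  "edge_witness m n ct (\<lambda>j. m - F ! j) E \<Longrightarrow> length F = n \<Longrightarrow> legal_op op F
    \<Longrightarrow> \<exists>E'. edge_witness m n ct (\<lambda>j. m - apply_op op F ! j) E'"
  by (cases op) (simp_all only: edge_witness_apply_Add edge_witness_apply_Shift)

lemma edge_witness_ops_path:
  assumes "ops_path F ops F'" "length F = n" "edge_witness m n ct (\<lambda>j. m - F ! j) E"
  shows "\<exists>E'. edge_witness m n ct (\<lambda>j. m - F' ! j) E'"
  using assms
proof (induction ops arbitrary: F E)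
  case (Cons op ops)
  then have op: "legal_op op F" and path: "ops_path (apply_op op F) ops F'" by simp_all
  obtain E' where "edge_witness m n ct (\<lambda>j. m - apply_op op F ! j) E'"
    using edge_witness_apply_op[OF Cons.prems(3,2) op] by blast
  then show ?case using Cons.IH[OF path] Cons.prems(2) by simp
qed auto

section \<open>Prefix domination and compatibility\<close>

lemma sorted_list_update_incr:
  fixes xs :: "nat list"
  assumes "sorted xs" "i < length xs" "Suc i < length xs \<Longrightarrow> xs ! i < xs ! Suc i"
  shows "sorted (xs[i := xs ! i + 1])"
  unfolding sorted_iff_nth_Suc
proof (intro allI impI)
  fix k assume k: "Suc k < length (xs[i := xs ! i + 1])"
  have "xs ! k \<le> xs ! Suc k" using assms(1) k by (simp add: sorted_iff_nth_Suc)
  then show "xs[i := xs ! i + 1] ! k \<le> xs[i := xs ! i + 1] ! Suc k"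
    using assms k by (cases "k = i"; cases "Suc k = i") (simp_all add: nth_list_update_if)
qed

lemma sorted_list_update_decr:
  fixes xs :: "nat list"
  assumes "sorted xs" "0 < i \<Longrightarrow> xs ! (i - 1) < xs ! i"
  shows "sorted (xs[i := xs ! i - 1])"
  unfolding sorted_iff_nth_Suc
proof (intro allI impI)
  fix k assume k: "Suc k < length (xs[i := xs ! i - 1])"
  have "xs ! k \<le> xs ! Suc k" using assms(1) k by (simp add: sorted_iff_nth_Suc)
  then show "xs[i := xs ! i - 1] ! k \<le> xs[i := xs ! i - 1] ! Suc k"
    using assms k by (cases "k = i"; cases "Suc k = i") (auto simp: nth_list_update_if)
qed

lemma legal_Add_if:
  assumes "sorted F" "q < length F" "Suc q < length F \<Longrightarrow> F ! q < F ! Suc q"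
  shows "legal_op (Add q) F"
  using assms(2) sorted_list_update_incr[OF assms] by simp

lemma legal_Shift_if:
  assumes F: "sorted F" and q: "q < length F" and r: "r < q"
    and source: "F ! (q - 1) < F ! q" and target: "Suc r < q \<Longrightarrow> F ! r < F ! Suc r"
    and gap: "F ! r + 1 < F ! q"
  shows "legal_op (Shift q r) F"
proof -
  let ?F1 = "F[q := F ! q - 1]"
  have "sorted ?F1" using F source by (rule sorted_list_update_decr)
  moreover have "?F1 ! r < ?F1 ! Suc r" if "Suc r < length ?F1"
    using target gap r q by (cases "Suc r = q") auto
  ultimately have "sorted (?F1[r := ?F1 ! r + 1])"
    using q r by (intro sorted_list_update_incr) auto
  then show ?thesis using q r gap by simp
qed

definition prefix_sum :: "nat list \<Rightarrow> nat \<Rightarrow> int" where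
  "prefix_sum F b = (\<Sum>j<b. int (F ! j))"

definition prefix_dominated :: "nat \<Rightarrow> nat list \<Rightarrow> nat list \<Rightarrow> bool" where
  "prefix_dominated n F F' \<longleftrightarrow> (\<forall>b\<le>n. prefix_sum F b \<le> prefix_sum F' b)"

definition prefix_potential :: "nat \<Rightarrow> nat list \<Rightarrow> int" where
  "prefix_potential n F = (\<Sum>b\<le>n. prefix_sum F b)"

lemma prefix_sum_list_update:
  assumes "k < length xs"
  shows "prefix_sum (xs[k := v]) b = prefix_sum xs b + (if k < b then int v - int (xs ! k) else 0)"
proof -
  have "prefix_sum (xs[k := v]) b = (\<Sum>j<b. int (xs ! j) + (if j = k then int v - int (xs ! k) else 0))"
    unfolding prefix_sum_def using assms by (intro sum.cong) (auto simp: nth_list_update_if)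
  then show ?thesis by (simp add: sum.distrib prefix_sum_def)
qed

lemma prefix_sum_apply_Add:
  "q < length F \<Longrightarrow> prefix_sum (apply_op (Add q) F) b = prefix_sum F b + (if q < b then 1 else 0)"
  by (simp add: prefix_sum_list_update)

lemma prefix_sum_apply_Shift:
  assumes "q < length F" "r < q" "0 < F ! q"
  shows "prefix_sum (apply_op (Shift q r) F) b
    = prefix_sum F b + (if r < b then 1 else 0) - (if q < b then 1 else 0)"
  using assms by (simp add: prefix_sum_list_update nth_list_update_if of_nat_diff)

lemma prefix_sum_mono:
  "(\<forall>j<b. F ! j \<le> F' ! j) \<Longrightarrow> prefix_sum F b \<le> prefix_sum F' b"
  unfolding prefix_sum_def by (intro sum_mono) auto

lemma prefix_sum_strict_mono:
  "(\<forall>j<b. F ! j \<le> F' ! j) \<Longrightarrow> r < b \<Longrightarrow> F ! r < F' ! r \<Longrightarrow> prefix_sum F b < prefix_sum F' b"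
  unfolding prefix_sum_def by (intro sum_strict_mono_ex1) auto

lemma prefix_potential_strict_mono:
  assumes "\<forall>b\<le>n. prefix_sum F b \<le> prefix_sum G b" "b0 \<le> n" "prefix_sum F b0 < prefix_sum G b0"
  shows "prefix_potential n F < prefix_potential n G"
  unfolding prefix_potential_def using assms by (intro sum_strict_mono_ex1) auto

lemma prefix_potential_mono:
  "prefix_dominated n F F' \<Longrightarrow> prefix_potential n F \<le> prefix_potential n F'"
  unfolding prefix_potential_def prefix_dominated_def by (intro sum_mono) auto

text \<open>If F' has a shorter row than F, take the lowest such row q: below q the prefix sums of
  F are still strictly smaller, so some row r < q of F is strictly shorter than in F'. Moving a
  cell from q down to the highest such r keeps F dominated.\<close>

lemma prefix_dominated_Shift_rows:
  assumes D: "prefix_dominated n F F'" and ex: "\<exists>j<n. F' ! j < F ! j"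
  obtains q r where "q < n" "F' ! q < F ! q" "r < q" "F ! r < F' ! r"
    "\<forall>j<q. F ! j \<le> F' ! j" "\<forall>j. r < j \<and> j < q \<longrightarrow> F ! j = F' ! j"
proof -
  define q where "q = (LEAST j. j < n \<and> F' ! j < F ! j)"
  have q: "q < n" "F' ! q < F ! q" using LeastI_ex[OF ex] unfolding q_def by auto
  have below_q: "F ! j \<le> F' ! j" if "j < q" for j
    using not_less_Least[of j "\<lambda>j. j < n \<and> F' ! j < F ! j"] that q unfolding q_def by auto
  have "prefix_sum F (Suc q) \<le> prefix_sum F' (Suc q)" using D q by (simp add: prefix_dominated_def)
  then have "prefix_sum F q < prefix_sum F' q" using q by (simp add: prefix_sum_def)
  then have "\<exists>j<q. F ! j < F' ! j" using prefix_sum_mono[of q F' F] by (meson not_le)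
  define R where "R = {j. j < q \<and> F ! j < F' ! j}"
  define r where "r = Max R"
  have "finite R" "R \<noteq> {}" using \<open>\<exists>j<q. F ! j < F' ! j\<close> by (auto simp: R_def)
  then have r: "r < q" "F ! r < F' ! r" using Max_in[of R] unfolding r_def R_def by auto
  have "F ! j = F' ! j" if "r < j" "j < q" for j
  proof -
    have "j \<notin> R" using Max_ge[OF \<open>finite R\<close>, of j] that unfolding r_def by auto
    then show ?thesis using below_q[of j] that unfolding R_def by auto
  qed
  then show thesis using that q r below_q by blast
qed

lemma prefix_dominated_Shift_step:
  assumes sF: "sorted F" and sF': "sorted F'" and len: "length F = n" "length F' = n"
    and D: "prefix_dominated n F F'" and ex: "\<exists>j<n. F' ! j < F ! j"
  shows "\<exists>op. legal_op op F \<and> prefix_dominated n (apply_op op F) F'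
    \<and> prefix_potential n F < prefix_potential n (apply_op op F)"
proof -
  obtain q r where q: "q < n" "F' ! q < F ! q" and r: "r < q" "F ! r < F' ! r"
    and below_q: "\<forall>j<q. F ! j \<le> F' ! j" and above_r: "\<forall>j. r < j \<and> j < q \<longrightarrow> F ! j = F' ! j"
    using prefix_dominated_Shift_rows[OF D ex] by blast
  have mono': "F' ! i \<le> F' ! j" if "i \<le> j" "j < n" for i j
    using sF' that len by (simp add: sorted_iff_nth_mono)
  have "legal_op (Shift q r) F"
  proof (rule legal_Shift_if[OF sF])
    show "F ! (q - 1) < F ! q" using below_q[rule_format, of "q - 1"] mono'[of "q - 1" q] q r by simp
    show "F ! r < F ! Suc r" if "Suc r < q"
      using above_r mono'[of r "Suc r"] r q that by simp
    show "F ! r + 1 < F ! q" using mono'[of r q] r q by simp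
  qed (use q r len in auto)
  moreover have pG: "prefix_sum (apply_op (Shift q r) F) b
      = prefix_sum F b + (if r < b then 1 else 0) - (if q < b then 1 else 0)" for b
    using q r len by (intro prefix_sum_apply_Shift) auto
  moreover have "prefix_sum (apply_op (Shift q r) F) b \<le> prefix_sum F' b" if b: "b \<le> n" for b
  proof (cases "r < b \<and> b \<le> q")
    case True
    then have "prefix_sum F b < prefix_sum F' b"
      using below_q r by (intro prefix_sum_strict_mono) auto
    then show ?thesis using pG[of b] True by simp
  next
    case False
    then show ?thesis using pG[of b] D b r by (auto simp: prefix_dominated_def)
  qed
  moreover have "prefix_potential n F < prefix_potential n (apply_op (Shift q r) F)"
    using pG r q by (intro prefix_potential_strict_mono[of n _ _ q]) auto
  ultimately show ?thesis unfolding prefix_dominated_def by blast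
qed

lemma prefix_dominated_Add_step:
  assumes sF: "sorted F" and sF': "sorted F'" and len: "length F = n" "length F' = n"
    and le: "\<forall>j<n. F ! j \<le> F' ! j" and ne: "F \<noteq> F'"
  shows "\<exists>op. legal_op op F \<and> prefix_dominated n (apply_op op F) F'
    \<and> prefix_potential n F < prefix_potential n (apply_op op F)"
proof -
  define R where "R = {j. j < n \<and> F ! j < F' ! j}"
  define q where "q = Max R"
  have "R \<noteq> {}"
    using ne le len nth_equalityI[of F F'] unfolding R_def by (metis (mono_tags) empty_Collect_eq le_neq_implies_less)
  moreover have "finite R" by (simp add: R_def)
  ultimately have q: "q < n" "F ! q < F' ! q" using Max_in[of R] unfolding q_def R_def by auto
  have above_q: "F ! j = F' ! j" if "q < j" "j < n" for j
  proof -
    have "j \<notin> R" using Max_ge[OF \<open>finite R\<close>, of j] that unfolding q_def by auto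
    then show ?thesis using le that unfolding R_def by auto
  qed
  have "legal_op (Add q) F"
  proof (rule legal_Add_if[OF sF])
    show "F ! q < F ! Suc q" if "Suc q < length F"
    proof -
      have "F' ! q \<le> F' ! Suc q" using sF' len that by (simp add: sorted_iff_nth_mono)
      then show ?thesis using above_q[of "Suc q"] q len that by simp
    qed
  qed (use q len in auto)
  moreover have pG: "prefix_sum (apply_op (Add q) F) b = prefix_sum F b + (if q < b then 1 else 0)" for b
    using q len by (intro prefix_sum_apply_Add) auto
  moreover have "prefix_dominated n (apply_op (Add q) F) F'"
    unfolding prefix_dominated_def
    using q le len by (auto intro!: prefix_sum_mono simp: nth_list_update_if)
  moreover have "prefix_potential n F < prefix_potential n (apply_op (Add q) F)"
    using pG q by (intro prefix_potential_strict_mono[of n _ _ n]) auto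
  ultimately show ?thesis by blast
qed

lemma prefix_dominated_imp_compatible:
  assumes "sorted F" "sorted F'" "length F = n" "length F' = n" "prefix_dominated n F F'"
  shows "compatible F F'"
  using assms
proof (induction "nat (prefix_potential n F' - prefix_potential n F)" arbitrary: F rule: less_induct)
  case less
  show ?case
  proof (cases "F = F'")
    case True
    then show ?thesis by (metis compatible_def ops_path.simps(1))
  next
    case False
    obtain op where op: "legal_op op F" "prefix_dominated n (apply_op op F) F'"
      "prefix_potential n F < prefix_potential n (apply_op op F)"
      using prefix_dominated_Shift_step[OF less.prems] prefix_dominated_Add_step[OF less.prems(1-4) _ False]
      by (meson not_le)
    have "sorted (apply_op op F)" using op(1) by (cases op) auto
    moreover have "prefix_potential n (apply_op op F) \<le> prefix_potential n F'"
      using op(2) by (rule prefix_potential_mono)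
    ultimately have "compatible (apply_op op F) F'"
      using less op by simp
    then show ?thesis using op(1) by (auto simp: compatible_def intro: exI[of _ "op # _"])
  qed
qed

lemma ops_path_num_adds:
  "ops_path F ops F' \<Longrightarrow> int (num_adds ops) = int (area F') - int (area F)"
proof (induction ops arbitrary: F)
  case (Cons op ops)
  then have op: "legal_op op F" and IH: "int (num_adds ops) = int (area F') - int (area (apply_op op F))"
    by simp_all
  show ?case
  proof (cases op)
    case (Add q)
    then have "area (apply_op op F) = area F + 1" using op by (simp add: area_def sum_list_update)
    then show ?thesis using IH Add by (simp add: num_adds_def)
  next
    case (Shift q r)
    then have q: "q < length F" "r < q" "0 < F ! q" using op by auto
    have "F ! q \<le> sum_list F" using q(1) by (rule elem_le_sum_list)
    then have "area (apply_op op F) = area F" using q Shift by (simp add: area_def sum_list_update)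
    then show ?thesis using IH Shift by (simp add: num_adds_def)
  qed
qed (simp add: num_adds_def)

lemma sorted_nth_le_last:
  fixes xs :: "nat list"
  assumes "sorted xs" "j < length xs"
  shows "xs ! j \<le> last xs"
proof -
  have "xs \<noteq> []" using assms(2) by auto
  then show ?thesis using assms by (simp add: last_conv_nth sorted_iff_nth_mono)
qed

lemma sorted_count_le_iff:
  fixes xs :: "nat list"
  assumes s: "sorted xs" and i: "i < length xs"
  shows "card {i'. i' < length xs \<and> xs ! i' \<le> v} \<le> i \<longleftrightarrow> v < xs ! i"
proof
  assume v: "v < xs ! i"
  have "i' < i" if "i' < length xs" "xs ! i' \<le> v" for i'
  proof (rule ccontr)
    assume "\<not> i' < i"
    then have "xs ! i \<le> xs ! i'" using s that(1) by (simp add: sorted_iff_nth_mono)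
    then show False using v that(2) by simp
  qed
  then have "{i'. i' < length xs \<and> xs ! i' \<le> v} \<subseteq> {..<i}" by auto
  then show "card {i'. i' < length xs \<and> xs ! i' \<le> v} \<le> i"
    using card_mono[OF finite_lessThan] by fastforce
next
  assume card: "card {i'. i' < length xs \<and> xs ! i' \<le> v} \<le> i"
  show "v < xs ! i"
  proof (rule ccontr)
    assume "\<not> v < xs ! i"
    then have "xs ! i' \<le> v" if "i' \<le> i" for i'
      using s i that by (meson le_trans not_less sorted_iff_nth_mono)
    then have "{..i} \<subseteq> {i'. i' < length xs \<and> xs ! i' \<le> v}"
      using i by auto
    then have "Suc i \<le> card {i'. i' < length xs \<and> xs ! i' \<le> v}"
      using card_mono[of "{i'. i' < length xs \<and> xs ! i' \<le> v}" "{..i}"] by simp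
    then show False using card by simp
  qed
qed

lemma length_kvec [simp]: "length (kvec m n c) = n"
  by (simp add: kvec_def)

lemma kvec_nth: "j < n \<Longrightarrow> kvec m n c ! j = card {i. i < m \<and> fst c ! i \<le> j}"
  by (simp add: kvec_def less_Suc_eq_le del: upt_Suc)

lemma sorted_kvec: "sorted (kvec m n c)"
  unfolding sorted_iff_nth_mono by (auto simp: kvec_nth intro!: card_mono)

lemma last_kvec:
  assumes "1 \<le> n" "stable m n c"
  shows "last (kvec m n c) = m"
proof -
  have "kvec m n c \<noteq> []" using assms(1) by (metis length_kvec list.size(3) not_one_le_zero)
  then have "last (kvec m n c) = card {i. i < m \<and> fst c ! i \<le> n - 1}"
    using assms(1) by (simp add: last_conv_nth kvec_nth)
  also have "{i. i < m \<and> fst c ! i \<le> n - 1} = {..<m}" using assms by (auto simp: stable_def)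
  finally show ?thesis by simp
qed

text \<open>Double counting in the rectangle of b rows and columns T = {i. fst c ! i < b}: column i
  holds fst c ! i cells below its height and b - fst c ! i cells of the Ferrers diagram of k.\<close>

lemma kvec_prefix_sum:
  assumes b: "b \<le> n"
  shows "(\<Sum>j<b. kvec m n c ! j) + (\<Sum>i\<in>{i. i < m \<and> fst c ! i < b}. fst c ! i)
    = card {i. i < m \<and> fst c ! i < b} * b"
proof -
  let ?T = "{i. i < m \<and> fst c ! i < b}"
  have "(\<Sum>j<b. kvec m n c ! j) = (\<Sum>j<b. \<Sum>i<m. if fst c ! i \<le> j then 1 else 0)"
    using b by (intro sum.cong) (simp_all add: kvec_nth sum.If_cases Int_def)
  also have "\<dots> = (\<Sum>i<m. \<Sum>j<b. if fst c ! i \<le> j then 1 else 0)" by (rule sum.swap)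
  also have "\<dots> = (\<Sum>i\<in>?T. b - fst c ! i)"
  proof (rule sum.mono_neutral_cong_right)
    fix i
    have "{j. j < b \<and> fst c ! i \<le> j} = {fst c ! i..<b}" by auto
    then show "(\<Sum>j<b. if fst c ! i \<le> j then 1 else 0) = b - fst c ! i"
      by (simp add: sum.If_cases Int_def)
  qed auto
  finally have "(\<Sum>j<b. kvec m n c ! j) = (\<Sum>i\<in>?T. b - fst c ! i)" .
  moreover have "(\<Sum>i\<in>?T. b - fst c ! i) + (\<Sum>i\<in>?T. fst c ! i) = (\<Sum>i\<in>?T. b)"
    by (subst sum.distrib[symmetric]) (intro sum.cong, auto)
  ultimately show ?thesis by simp
qed

lemma prefix_dominated_kvec:
  assumes "covers_edges m n c"
  shows "prefix_dominated n (kvec m n c) (snd c)"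
  unfolding prefix_dominated_def prefix_sum_def
proof (intro allI impI)
  fix b assume b: "b \<le> n"
  let ?T = "{i. i < m \<and> fst c ! i < b}"
  have "card ?T * card {..<b} \<le> (\<Sum>i\<in>?T. fst c ! i) + (\<Sum>j<b. snd c ! j)"
    using b by (intro covers_edgesD[OF assms]) auto
  then have "(\<Sum>j<b. kvec m n c ! j) \<le> (\<Sum>j<b. snd c ! j)" using kvec_prefix_sum[OF b, of m c] by simp
  then show "(\<Sum>j<b. int (kvec m n c ! j)) \<le> (\<Sum>j<b. int (snd c ! j))"
    by (metis of_nat_le_iff of_nat_sum)
qed

lemma level_eq_area_diff:
  assumes "is_config m n c" "stable m n c"
  shows "level m n c = int (area (snd c)) - int (area (kvec m n c))"
proof -
  have T: "{i. i < m \<and> fst c ! i < n} = {..<m}" using assms(2) by (auto simp: stable_def)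
  have "(\<Sum>j<n. kvec m n c ! j) + (\<Sum>i<m. fst c ! i) = m * n"
    using kvec_prefix_sum[of n n m c] unfolding T by simp
  moreover have "area (kvec m n c) = (\<Sum>j<n. kvec m n c ! j)" "sum_list (fst c) = (\<Sum>i<m. fst c ! i)"
    using assms(1) by (simp_all add: area_def sum_list_sum_nth atLeast0LessThan is_config_def)
  ultimately show ?thesis unfolding level_def area_def by linarith
qed

definition conjugate_rows :: "nat \<Rightarrow> nat \<Rightarrow> nat list \<Rightarrow> nat list" where
  "conjugate_rows m n F = map (\<lambda>i. card {j. j < n \<and> F ! j \<le> i}) [0..<m]"

lemma kvec_conjugate_rows:
  assumes "sorted F" "length F = n" "\<forall>j<n. F ! j \<le> m"
  shows "kvec m n (conjugate_rows m n F, cb) = F"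
proof (rule nth_equalityI)
  fix j assume "j < length (kvec m n (conjugate_rows m n F, cb))"
  then have j: "j < n" by simp
  have "conjugate_rows m n F ! i \<le> j \<longleftrightarrow> i < F ! j" if "i < m" for i
    using sorted_count_le_iff[OF assms(1), of j i] that j assms(2) by (simp add: conjugate_rows_def)
  then have "{i. i < m \<and> conjugate_rows m n F ! i \<le> j} = {..<F ! j}" using assms(3) j by auto
  then show "kvec m n (conjugate_rows m n F, cb) ! j = F ! j" using j by (simp add: kvec_nth)
qed (simp add: assms)

lemma conjugate_rows_kvec:
  assumes "sorted (fst c)" "length (fst c) = m" "\<forall>i<m. fst c ! i < n"
  shows "conjugate_rows m n (kvec m n c) = fst c"
proof (rule nth_equalityI)
  fix i assume "i < length (conjugate_rows m n (kvec m n c))"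
  then have i: "i < m" by (simp add: conjugate_rows_def)
  have "kvec m n c ! j \<le> i \<longleftrightarrow> j < fst c ! i" if "j < n" for j
    using sorted_count_le_iff[OF assms(1), of i j] that i assms(2) by (simp add: kvec_nth)
  then have "{j. j < n \<and> kvec m n c ! j \<le> i} = {..<fst c ! i}" using assms(3) i by auto
  then show "conjugate_rows m n (kvec m n c) ! i = fst c ! i" using i by (simp add: conjugate_rows_def)
qed (simp add: assms conjugate_rows_def)

lemma edge_witness_kvec:
  "edge_witness m n (fst c) (\<lambda>j. m - kvec m n c ! j) {(i, j). j < fst c ! i}"
  unfolding edge_witness_def
proof (intro conjI allI impI)
  fix j assume j: "j < n"
  have "{i. i < m \<and> (i, j) \<in> {(i, j). j < fst c ! i}} = {..<m} - {i. i < m \<and> fst c ! i \<le> j}"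
    by auto
  moreover have "{i. i < m \<and> fst c ! i \<le> j} \<subseteq> {..<m}" by auto
  ultimately show "card {i. i < m \<and> (i, j) \<in> {(i, j). j < fst c ! i}} = m - kvec m n c ! j"
    using j by (simp add: kvec_nth card_Diff_subset)
next
  fix i
  have "{j. j < n \<and> (i, j) \<in> {(i, j). j < fst c ! i}} \<subseteq> {..<fst c ! i}" by auto
  then show "card {j. j < n \<and> (i, j) \<in> {(i, j). j < fst c ! i}} \<le> fst c ! i"
    using card_mono[OF finite_lessThan] by fastforce
qed

lemma Ferrers_eq_nth_le: "F \<in> Ferrers_eq m n \<Longrightarrow> j < n \<Longrightarrow> F ! j \<le> m"
  using sorted_nth_le_last[of F j] by (auto simp: Ferrers_eq_def)

lemma Ferrers_le_nth_le: "F \<in> Ferrers_le m n \<Longrightarrow> j < n \<Longrightarrow> F ! j \<le> m"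
  using sorted_nth_le_last[of F j] by (auto simp: Ferrers_le_def)

lemma sorted_conjugate_rows: "sorted (conjugate_rows m n F)"
  unfolding sorted_iff_nth_mono conjugate_rows_def by (auto intro!: card_mono)

lemma conjugate_rows_less:
  assumes "F \<in> Ferrers_eq m n" "1 \<le> n" "i < m"
  shows "conjugate_rows m n F ! i < n"
proof -
  have "F \<noteq> []" using assms(1,2) by (auto simp: Ferrers_eq_def)
  then have "F ! (n - 1) = m" using assms(1) by (auto simp: Ferrers_eq_def last_conv_nth)
  then have "j < n - 1" if "j < n" "F ! j \<le> i" for j
    using assms(3) that by (cases "j = n - 1") auto
  then have "{j. j < n \<and> F ! j \<le> i} \<subseteq> {..<n - 1}" by auto
  then have "card {j. j < n \<and> F ! j \<le> i} \<le> n - 1" using card_mono[OF finite_lessThan] by fastforce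
  then show ?thesis using assms(2,3) by (simp add: conjugate_rows_def)
qed

lemma compatible_pair_if_stoch_recurrent:
  assumes n: "1 \<le> n" and c: "is_config m n c" "sorted_config c" "stoch_recurrent p m n c"
  shows "kvec m n c \<in> Ferrers_eq m n \<and> snd c \<in> Ferrers_le m n \<and> compatible (kvec m n c) (snd c)"
proof -
  have stable: "stable m n c" using c(3) by (simp add: stoch_recurrent_def)
  have len: "length (snd c) = n" and sorted: "sorted (snd c)"
    using c(1,2) by (simp_all add: is_config_def sorted_config_def)
  have "snd c \<noteq> []" using n len by auto
  then have "last (snd c) \<le> m"
    using stable n len by (auto simp: stable_def last_conv_nth less_Suc_eq_le)
  moreover have "prefix_dominated n (kvec m n c) (snd c)"
    using covers_edges_if_stoch_recurrent[OF n c(3)] by (rule prefix_dominated_kvec)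
  then have "compatible (kvec m n c) (snd c)"
    using prefix_dominated_imp_compatible[OF sorted_kvec sorted length_kvec len] by blast
  ultimately show ?thesis
    using last_kvec[OF n stable] sorted_kvec sorted len by (simp add: Ferrers_eq_def Ferrers_le_def)
qed

lemma stoch_recurrent_conjugate_rows:
  assumes p: "0 < p" "p < 1" and n: "1 \<le> n"
    and F: "F \<in> Ferrers_eq m n" and F': "F' \<in> Ferrers_le m n" and cp: "compatible F F'"
  defines "c \<equiv> (conjugate_rows m n F, F')"
  shows "is_config m n c \<and> sorted_config c \<and> stoch_recurrent p m n c \<and> kvec m n c = F"
proof -
  let ?ct = "conjugate_rows m n F"
  have lenF: "length F = n" and lenF': "length F' = n" and sorted: "sorted F" "sorted F'"
    using F F' by (simp_all add: Ferrers_eq_def Ferrers_le_def)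
  have ct: "\<forall>i<m. ?ct ! i < n" using conjugate_rows_less[OF F n] by blast
  have cb: "\<forall>j<n. F' ! j \<le> m" using Ferrers_le_nth_le[OF F'] by blast
  have kvec: "kvec m n c = F"
    unfolding c_def using Ferrers_eq_nth_le[OF F] lenF sorted by (intro kvec_conjugate_rows) auto
  have config: "is_config m n c" "stable m n c" "sorted_config c"
    using lenF' ct cb sorted sorted_conjugate_rows
    by (auto simp: c_def is_config_def stable_def sorted_config_def conjugate_rows_def less_Suc_eq_le)
  obtain ops where "ops_path F ops F'" using cp by (auto simp: compatible_def)
  moreover have "edge_witness m n ?ct (\<lambda>j. m - F ! j) {(i, j). j < ?ct ! i}"
    using edge_witness_kvec[of m n c] kvec by (simp add: c_def)
  ultimately obtain E where "edge_witness m n ?ct (\<lambda>j. m - F' ! j) E"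
    using edge_witness_ops_path lenF by blast
  then have "(chain_step p m n)\<^sup>*\<^sup>* (max_stable m n) c"
    unfolding c_def using lenF' ct cb
    by (intro chain_reach_of_edge_witness[OF p n]) (simp_all add: conjugate_rows_def)
  then show ?thesis using stoch_recurrent_iff_reachable[OF n config(1,2)] config kvec by blast
qed

lemma inj_on_Psi:
  "inj_on (Psi m n) {c. is_config m n c \<and> sorted_config c \<and> stable m n c}"
proof (rule inj_onI)
  fix c d assume "c \<in> {c. is_config m n c \<and> sorted_config c \<and> stable m n c}"
    "d \<in> {c. is_config m n c \<and> sorted_config c \<and> stable m n c}" and eq: "Psi m n c = Psi m n d"
  then have "conjugate_rows m n (kvec m n c) = fst c" "conjugate_rows m n (kvec m n d) = fst d"
    by (auto simp: is_config_def sorted_config_def stable_def intro!: conjugate_rows_kvec)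
  then show "c = d" using eq by (simp add: Psi_def prod_eq_iff)
qed

theorem theorem3p2:
  fixes p :: real and m n :: nat
  assumes "0 < p" and "p < 1" and "1 \<le> n"
  shows "bij_betw (Psi m n)
           {c. is_config m n c \<and> sorted_config c \<and> stoch_recurrent p m n c}
           {(F, F'). F \<in> Ferrers_eq m n \<and> F' \<in> Ferrers_le m n \<and> compatible F F'}
       \<and> (\<forall>c. is_config m n c \<and> sorted_config c \<and> stoch_recurrent p m n c \<longrightarrow>
            level m n c = int (area (snd c)) - int (area (kvec m n c)) \<and>
            (\<forall>ops. ops_path (kvec m n c) ops (snd c) \<longrightarrow>
                   int (num_adds ops) = level m n c))"
proof (intro conjI allI impI)
  let ?R = "{c. is_config m n c \<and> sorted_config c \<and> stoch_recurrent p m n c}"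
  let ?C = "{(F, F'). F \<in> Ferrers_eq m n \<and> F' \<in> Ferrers_le m n \<and> compatible F F'}"
  have "inj_on (Psi m n) ?R"
    by (rule inj_on_subset[OF inj_on_Psi]) (auto simp: stoch_recurrent_def)
  moreover have "Psi m n ` ?R \<subseteq> ?C"
    using compatible_pair_if_stoch_recurrent[OF assms(3)] by (auto simp: Psi_def)
  moreover have "?C \<subseteq> Psi m n ` ?R"
  proof (clarsimp)
    fix F F' assume "F \<in> Ferrers_eq m n" "F' \<in> Ferrers_le m n" "compatible F F'"
    with stoch_recurrent_conjugate_rows[OF assms] show "(F, F') \<in> Psi m n ` ?R"
      by (force simp: Psi_def)
  qed
  ultimately show "bij_betw (Psi m n) ?R ?C" by (auto simp: bij_betw_def)
next
  fix c assume "is_config m n c \<and> sorted_config c \<and> stoch_recurrent p m n c"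
  then show level: "level m n c = int (area (snd c)) - int (area (kvec m n c))"
    by (intro level_eq_area_diff) (auto simp: stoch_recurrent_def)
  fix ops assume "ops_path (kvec m n c) ops (snd c)"
  then show "int (num_adds ops) = level m n c" using ops_path_num_adds level by simp
qed

end
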